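(* Let $\mathbb{F}$ be a finite field of odd characteristic, $\psi$ a nontrivial additive character on $\mathbb{F}$ (with values in $\mathbb{Q}(\zeta_p)$), and $\lambda$ the quadratic character of $\mathbb{F}^\times$ extended by $\lambda(0)=0$. For $\gamma\in\mathbb{F}^\times$ and $\beta\in\mathbb{F}$ let $$M_{\mathbb{F}}(\beta,\gamma)=\sum_{x\in\mathbb{F}}\sum_{z\in\mathbb{F}}\lambda\big(x(x+16\gamma)(x+z^2)\big)\psi(\beta z).$$ Then $M_{\mathbb{F}}(\beta,\gamma)=1$ if $\beta=0$, and $M_{\mathbb{F}}(\beta,\gamma)=\mathrm{Kl}_{\mathbb{F}}(\psi;\gamma\beta^2)^2-|\mathbb{F}|$ if $\beta\neq0$.
   Context: For $\alpha\in\mathbb{F}^\times$, the (sign-normalised) Kloosterman sum is $\mathrm{Kl}_{\mathbb{F}}(\psi;\alpha)=-\sum_{x\in\mathbb{F}^\times}\psi(x+\alpha/x)$. *)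

theory Defs
  imports Complex_Main
begin

definition additive_char :: "('a::field \<Rightarrow> complex) \<Rightarrow> bool" where
  "additive_char \<psi> \<longleftrightarrow> \<psi> 0 = 1 \<and> (\<forall>x y. \<psi> (x + y) = \<psi> x * \<psi> y)"

definition nontrivial_additive_char :: "('a::field \<Rightarrow> complex) \<Rightarrow> bool" where
  "nontrivial_additive_char \<psi> \<longleftrightarrow> additive_char \<psi> \<and> (\<exists>x. \<psi> x \<noteq> 1)"

definition quad_char :: "'a::field \<Rightarrow> complex" where
  "quad_char x = (if x = 0 then 0 else if (\<exists>y. y ^ 2 = x) then 1 else -1)"

text \<open>Sign-normalised Kloosterman sum.\<close>
definition kloosterman :: "('a::{finite,field} \<Rightarrow> complex) \<Rightarrow> 'a \<Rightarrow> complex" where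
  "kloosterman \<psi> \<alpha> = - (\<Sum>x\<in>{x::'a. x \<noteq> 0}. \<psi> (x + \<alpha> / x))"

definition M_sum :: "('a::{finite,field} \<Rightarrow> complex) \<Rightarrow> 'a \<Rightarrow> 'a \<Rightarrow> complex" where
  "M_sum \<psi> \<beta> \<gamma> = (\<Sum>x\<in>(UNIV::'a set). \<Sum>z\<in>(UNIV::'a set).
      quad_char (x * (x + 16 * \<gamma>) * (x + z ^ 2)) * \<psi> (\<beta> * z))"

end

(*
  Writing x = -4w, the sum becomes  M = \<Sum>w \<lambda>(w(w - 4\<gamma>)) G(w)  with
  G(w) = \<Sum>z \<lambda>(z\<^sup>2 - 4w) \<psi>(\<beta>z) = discriminant_sum \<psi> \<beta> w. For \<beta> = 0 every G(w) with
  w \<noteq> 0 equals -1, so M = 1.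

  For \<beta> \<noteq> 0 put a = \<gamma>\<beta>\<^sup>2. Expanding Kl(a)\<^sup>2 over pairs (x, y) and grouping them by
  s = x + y, p = x y, the number of pairs is 1 + \<lambda>(s\<^sup>2 - 4p), which gives
  Kl(a)\<^sup>2 = q + \<Sum>(p \<noteq> 0) \<Sum>s \<lambda>(s\<^sup>2 - 4p) \<psi>(s(p + a)/p). Rescaling s turns the inner sum
  into G((p + a)\<^sup>2/(p\<beta>\<^sup>2)) (it is -1 at p = -a), and p \<mapsto> (p + a)\<^sup>2/(p\<beta>\<^sup>2) takes every
  value w \<noteq> 0 exactly 1 + \<lambda>(w(w - 4\<gamma>)) times. Together with \<Sum>w G(w) = 0 and G(0) = -1
  this yields Kl(a)\<^sup>2 = q + M.
*)

theory Submission
  imports Defs "HOL-Computational_Algebra.Nth_Powers"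
begin

lemma two_neq_zero_if_odd_char:
  assumes "odd CHAR('a::field)"
  shows "(2::'a) \<noteq> 0"
proof
  assume "(2::'a) = 0"
  then have "CHAR('a) dvd 2"
    by (metis of_nat_eq_0_iff_char_dvd of_nat_numeral)
  then have "CHAR('a) \<le> 2" by (rule dvd_imp_le) simp
  with assms have "CHAR('a) = 1" by presburger
  with CHAR_not_1 show False by simp
qed

lemma four_neq_zero: "(2::'a::field) \<noteq> 0 \<Longrightarrow> (4::'a) \<noteq> 0"
  by (metis mult_2 mult_eq_0_iff numeral_Bit0)

lemma sum_UNIV_add_const:
  fixes h :: "'a::{finite,ab_group_add} \<Rightarrow> 'b::comm_monoid_add"
  shows "(\<Sum>x\<in>UNIV. h (x + c)) = (\<Sum>x\<in>UNIV. h x)"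
  by (rule sum.reindex_bij_witness[of _ "\<lambda>x. x - c" "\<lambda>x. x + c"]) auto

lemma sum_UNIV_mult_const:
  fixes h :: "'a::{finite,field} \<Rightarrow> 'b::comm_monoid_add"
  assumes "c \<noteq> 0"
  shows "(\<Sum>x\<in>UNIV. h (c * x)) = (\<Sum>x\<in>UNIV. h x)"
  by (rule sum.reindex_bij_witness[of _ "\<lambda>x. x / c" "\<lambda>x. c * x"]) (use assms in auto)

lemma sum_card_fibres:
  fixes g :: "'a \<Rightarrow> 'b::finite" and f :: "'b \<Rightarrow> 'c::comm_semiring_1"
  assumes "finite A"
  shows "(\<Sum>x\<in>A. f (g x)) = (\<Sum>w\<in>UNIV. of_nat (card {x\<in>A. g x = w}) * f w)"
proof -
  have "(\<Sum>x\<in>A. f (g x)) = (\<Sum>w\<in>UNIV. \<Sum>x | x \<in> A \<and> g x = w. f (g x))"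
    by (rule sum.group[symmetric]) (use assms in auto)
  then show ?thesis by simp
qed

lemma quad_char_0 [simp]: "quad_char 0 = 0"
  by (simp add: quad_char_def)

lemma quad_char_eq: "quad_char x = (if x = 0 then 0 else if is_square x then 1 else -1)"
  by (auto simp: quad_char_def is_nth_power_def)

lemma quad_char_power2: "x \<noteq> 0 \<Longrightarrow> quad_char (x ^ 2) = 1"
  by (simp add: quad_char_eq)

lemma card_square_roots:
  fixes u :: "'a::{finite,field}"
  assumes "(2::'a) \<noteq> 0"
  shows "of_nat (card {x. x ^ 2 = u}) = 1 + quad_char u"
proof (cases "is_square u")
  case True
  then obtain y where u: "u = y ^ 2" by (auto elim: is_nth_powerE)
  have "y \<noteq> -y" if "y \<noteq> 0"
    using assms that by (metis add.right_inverse mult_2 mult_eq_0_iff)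
  moreover have "{x. x ^ 2 = u} = {y, -y}" by (auto simp: u power2_eq_iff)
  ultimately show ?thesis
    by (cases "y = 0") (auto simp: u quad_char_power2)
next
  case False
  then have "{x. x ^ 2 = u} = {}" "u \<noteq> 0" by (auto simp: is_nth_power_def)
  with False show ?thesis by (simp add: quad_char_eq)
qed

lemma card_nonzero_eq_twice_squares:
  assumes "(2::'a::{finite,field}) \<noteq> 0"
  shows "card {x::'a. x \<noteq> 0} = 2 * card {x::'a. x \<noteq> 0 \<and> is_square x}"
proof -
  have maps: "(\<lambda>x. x ^ 2) ` {x::'a. x \<noteq> 0} \<subseteq> {x. x \<noteq> 0 \<and> is_square x}" by auto
  have "card {x::'a. x \<noteq> 0} = (\<Sum>s::'a | s \<noteq> 0 \<and> is_square s. card {x. x \<noteq> 0 \<and> x ^ 2 = s})"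
    using sum.group[OF _ _ maps, of "\<lambda>_. 1::nat", symmetric] by simp
  also have "\<dots> = (\<Sum>s::'a | s \<noteq> 0 \<and> is_square s. 2)"
  proof (rule sum.cong)
    fix s :: 'a assume "s \<in> {s. s \<noteq> 0 \<and> is_square s}"
    then have "{x. x \<noteq> 0 \<and> x ^ 2 = s} = {x. x ^ 2 = s}" "quad_char s = 1"
      by (auto simp: quad_char_eq)
    with card_square_roots[OF assms, of s] show "card {x. x \<noteq> 0 \<and> x ^ 2 = s} = 2"
      by (metis of_nat_eq_iff of_nat_numeral one_add_one)
  qed simp
  finally show ?thesis by simp
qed

lemma nonsquare_mult_nonsquare:
  fixes n m :: "'a::{finite,field}"
  assumes "(2::'a) \<noteq> 0" and "n \<noteq> 0" "\<not> is_square n" and "m \<noteq> 0" "\<not> is_square m"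
  shows "is_square (n * m)"
proof -
  let ?S = "{x::'a. x \<noteq> 0 \<and> is_square x}" and ?N = "{x::'a. x \<noteq> 0 \<and> \<not> is_square x}"
  have "card {x::'a. x \<noteq> 0} = card ?S + card ?N"
    by (subst card_Un_disjoint[symmetric]) (auto intro: arg_cong[where f=card])
  then have card_N: "card ?N = card ?S"
    using card_nonzero_eq_twice_squares[OF assms(1)] by simp
  have nonsquare: "\<not> is_square (n * s)" if s: "s \<in> ?S" for s
  proof
    assume "is_square (n * s)"
    then obtain c where "n * s = c ^ 2" by (auto elim: is_nth_powerE)
    moreover obtain a where "s = a ^ 2" using s by (auto simp: is_nth_power_def)
    moreover have "a \<noteq> 0" using s calculation(2) by auto
    ultimately have "n = (c / a) ^ 2" by (simp add: power_divide eq_divide_eq)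
    with assms(3) show False by auto
  qed
  have "inj_on (\<lambda>s. n * s) ?S" using assms(2) by (auto intro: inj_onI)
  then have "(\<lambda>s. n * s) ` ?S = ?N"
    using assms(2) nonsquare card_N by (intro card_subset_eq) (auto simp: card_image)
  then obtain s where "m = n * s" "is_square s" using assms(4,5) by blast
  then show ?thesis
    using is_nth_power_mult[OF is_nth_power_nth_power[of 2 n]] by (simp add: power2_eq_square mult.assoc)
qed

lemma is_square_divide:
  fixes a b :: "'a::field"
  shows "is_square a \<Longrightarrow> is_square b \<Longrightarrow> is_square (a / b)"
  by (auto simp: is_nth_power_def) (metis power_divide)

lemma is_square_mult_iff:
  fixes x y :: "'a::{finite,field}"
  assumes "(2::'a) \<noteq> 0" and "x \<noteq> 0" "y \<noteq> 0"
  shows "is_square (x * y) \<longleftrightarrow> (is_square x \<longleftrightarrow> is_square y)"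
proof -
  have "is_square y" if "is_square (x * y)" "is_square x" "x \<noteq> 0" for x y :: 'a
    using is_square_divide[OF that(1,2)] that(3) by simp
  with assms nonsquare_mult_nonsquare[OF assms(1,2) _ assms(3)] show ?thesis
    by (metis is_nth_power_mult mult.commute)
qed

lemma quad_char_mult:
  fixes x y :: "'a::{finite,field}"
  assumes "(2::'a) \<noteq> 0"
  shows "quad_char (x * y) = quad_char x * quad_char y"
  using is_square_mult_iff[OF assms, of x y] by (simp add: quad_char_eq)

lemma quad_char_mult_power2:
  fixes u t :: "'a::{finite,field}"
  assumes "(2::'a) \<noteq> 0" and "t \<noteq> 0"
  shows "quad_char (u * t ^ 2) = quad_char u"
  using assms by (simp add: quad_char_mult quad_char_power2)

lemma exists_nonsquare:
  assumes "(2::'a::{finite,field}) \<noteq> 0"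
  obtains n :: "'a::{finite,field}" where "\<not> is_square n"
proof -
  have "card {x::'a. x \<noteq> 0} \<noteq> card {x::'a. x \<noteq> 0 \<and> is_square x}"
    unfolding card_nonzero_eq_twice_squares[OF assms] by (auto simp: card_gt_0_iff intro!: exI[of _ 1])
  then show ?thesis using that by metis
qed

lemma sum_quad_char:
  fixes c :: "'a::{finite,field}"
  assumes "(2::'a) \<noteq> 0"
  shows "(\<Sum>x\<in>UNIV. quad_char (x + c)) = 0"
proof -
  obtain n :: 'a where n: "\<not> is_square n" using exists_nonsquare[OF assms] .
  then have "n \<noteq> 0" by auto
  have "(\<Sum>x::'a\<in>UNIV. quad_char x) = (\<Sum>x\<in>UNIV. quad_char (n * x))"
    by (simp add: sum_UNIV_mult_const[OF \<open>n \<noteq> 0\<close>])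
  also have "\<dots> = quad_char n * (\<Sum>x::'a\<in>UNIV. quad_char x)"
    by (simp add: quad_char_mult[OF assms] sum_distrib_left)
  also have "quad_char n = -1" using n \<open>n \<noteq> 0\<close> by (simp add: quad_char_eq)
  finally have "(\<Sum>x::'a\<in>UNIV. quad_char x) = 0" by simp
  then show ?thesis by (simp add: sum_UNIV_add_const)
qed

lemma sum_quad_char_mult_add:
  fixes b :: "'a::{finite,field}"
  assumes "(2::'a) \<noteq> 0" and "b \<noteq> 0"
  shows "(\<Sum>x\<in>UNIV. quad_char (x * (x + b))) = -1"
proof -
  have "(\<Sum>x\<in>UNIV. quad_char (x * (x + b))) = (\<Sum>x | x \<noteq> 0. quad_char (1 + b / x))"
  proof (rule sum.mono_neutral_cong_right)
    fix x :: 'a assume "x \<in> {x. x \<noteq> 0}"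
    then have "x \<noteq> 0" by simp
    then have "x * (x + b) = (1 + b / x) * x ^ 2" by (simp add: field_simps power2_eq_square)
    with quad_char_mult_power2[OF assms(1) \<open>x \<noteq> 0\<close>]
    show "quad_char (x * (x + b)) = quad_char (1 + b / x)" by simp
  qed simp_all
  also have "\<dots> = (\<Sum>u::'a | u \<noteq> 1. quad_char u)"
    by (rule sum.reindex_bij_witness[of _ "\<lambda>u. b / (u - 1)" "\<lambda>x. 1 + b / x"]) (use assms in auto)
  also have "\<dots> = (\<Sum>u::'a\<in>UNIV. quad_char u) - quad_char (1::'a)"
    by (simp add: Collect_neg_eq Compl_eq_Diff_UNIV sum_diff1)
  also have "\<dots> = -1"
    using sum_quad_char[OF assms(1), of 0] quad_char_power2[of "1::'a"] by simp
  finally show ?thesis .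
qed

lemma sum_quad_char_power2_add:
  fixes d :: "'a::{finite,field}"
  assumes "(2::'a) \<noteq> 0" and "d \<noteq> 0"
  shows "(\<Sum>s\<in>UNIV. quad_char (s ^ 2 + d)) = -1"
proof -
  have "(\<Sum>s\<in>UNIV. quad_char (s ^ 2 + d)) = (\<Sum>u\<in>UNIV. (1 + quad_char u) * quad_char (u + d))"
    using sum_card_fibres[of UNIV "\<lambda>u. quad_char (u + d)" "\<lambda>s::'a. s ^ 2"]
    by (simp add: card_square_roots[OF assms(1)])
  also have "\<dots> = (\<Sum>u\<in>UNIV. quad_char (u + d)) + (\<Sum>u\<in>UNIV. quad_char (u * (u + d)))"
    by (simp add: quad_char_mult[OF assms(1)] distrib_right sum.distrib)
  also have "\<dots> = -1"
    using assms by (simp add: sum_quad_char sum_quad_char_mult_add)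
  finally show ?thesis .
qed

lemma card_quadratic_roots:
  fixes b c :: "'a::{finite,field}"
  assumes "(2::'a) \<noteq> 0"
  shows "of_nat (card {x. x ^ 2 + b * x + c = 0}) = 1 + quad_char (b ^ 2 - 4 * c)"
proof -
  have roots: "x ^ 2 + b * x + c = 0 \<longleftrightarrow> (2 * x + b) ^ 2 = b ^ 2 - 4 * c" for x :: 'a
  proof -
    have "(2 * x + b) ^ 2 - (b ^ 2 - 4 * c) = 2 * 2 * (x ^ 2 + b * x + c)"
      by (simp add: algebra_simps power2_eq_square)
    then show ?thesis using assms by (metis eq_iff_diff_eq_0 mult_eq_0_iff)
  qed
  have "bij_betw (\<lambda>x. 2 * x + b) {x. x ^ 2 + b * x + c = 0} {y. y ^ 2 = b ^ 2 - 4 * c}"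
  proof (rule bij_betw_byWitness[where f'="\<lambda>y. (y - b) / 2"])
    have half: "2 * ((y - b) / 2) + b = y" for y :: 'a
      using assms by (metis diff_add_cancel nonzero_mult_div_cancel_left times_divide_eq_right)
    then show "\<forall>y\<in>{y. y ^ 2 = b ^ 2 - 4 * c}. 2 * ((y - b) / 2) + b = y" by simp
    show "(\<lambda>y. (y - b) / 2) ` {y. y ^ 2 = b ^ 2 - 4 * c} \<subseteq> {x. x ^ 2 + b * x + c = 0}"
      by (simp only: image_subset_iff mem_Collect_eq roots half) simp
  qed (use assms roots in \<open>simp_all add: image_subset_iff\<close>)
  then show ?thesis
    by (simp add: bij_betw_same_card card_square_roots[OF assms])
qed

lemma sum_additive_char:
  fixes \<psi> :: "'a::{finite,field} \<Rightarrow> complex"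
  assumes "nontrivial_additive_char \<psi>"
  shows "(\<Sum>x\<in>UNIV. \<psi> (c * x)) = (if c = 0 then of_nat (card (UNIV::'a set)) else 0)"
proof -
  obtain t where t: "\<psi> t \<noteq> 1" and \<psi>0: "\<psi> 0 = 1" and \<psi>_add: "\<And>x y. \<psi> (x + y) = \<psi> x * \<psi> y"
    using assms unfolding nontrivial_additive_char_def additive_char_def by blast
  have "(\<Sum>x\<in>UNIV. \<psi> x) = (\<Sum>x\<in>UNIV. \<psi> (x + t))" by (simp add: sum_UNIV_add_const)
  also have "\<dots> = \<psi> t * (\<Sum>x\<in>UNIV. \<psi> x)" by (simp add: \<psi>_add sum_distrib_left mult.commute)
  finally have "(\<Sum>x\<in>UNIV. \<psi> x) = 0" using t by (simp add: algebra_simps)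
  then show ?thesis using \<psi>0 by (simp add: sum_UNIV_mult_const)
qed

text \<open>Since \<^term>\<open>1 + quad_char (z\<^sup>2 - 4 * w)\<close> counts the roots of \<open>T\<^sup>2 - z T + w\<close>, these sums are
  what remains of a sum over pairs once the pairs are grouped by their sum z and product w.\<close>
definition discriminant_sum :: "('a::{finite,field} \<Rightarrow> complex) \<Rightarrow> 'a \<Rightarrow> 'a \<Rightarrow> complex" where
  "discriminant_sum \<psi> c w = (\<Sum>z\<in>UNIV. quad_char (z ^ 2 - 4 * w) * \<psi> (c * z))"

lemma M_sum_eq_discriminant_sums:
  fixes \<psi> :: "'a::{finite,field} \<Rightarrow> complex"
  assumes "(2::'a) \<noteq> 0"
  shows "M_sum \<psi> \<beta> \<gamma> = (\<Sum>w\<in>UNIV. quad_char (w * (w - 4 * \<gamma>)) * discriminant_sum \<psi> \<beta> w)"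
proof -
  have four: "(- 4::'a) \<noteq> 0" using four_neq_zero[OF assms] by simp
  have "M_sum \<psi> \<beta> \<gamma> = (\<Sum>x\<in>UNIV. quad_char (x * (x + 16 * \<gamma>)) *
      (\<Sum>z\<in>UNIV. quad_char (z ^ 2 + x) * \<psi> (\<beta> * z)))"
    unfolding M_sum_def by (simp add: quad_char_mult[OF assms] sum_distrib_left mult.assoc add.commute)
  also have "\<dots> = (\<Sum>w\<in>UNIV. quad_char (- 4 * w * (- 4 * w + 16 * \<gamma>)) *
      (\<Sum>z\<in>UNIV. quad_char (z ^ 2 + - 4 * w) * \<psi> (\<beta> * z)))"
    by (rule sum_UNIV_mult_const[OF four, symmetric])
  also have "\<dots> = (\<Sum>w\<in>UNIV. quad_char (w * (w - 4 * \<gamma>)) * discriminant_sum \<psi> \<beta> w)"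
  proof -
    have "quad_char (- 4 * w * (- 4 * w + 16 * \<gamma>)) = quad_char (w * (w - 4 * \<gamma>))" for w :: 'a
    proof -
      have "- 4 * w * (- 4 * w + 16 * \<gamma>) = w * (w - 4 * \<gamma>) * (- 4) ^ 2"
        by (simp add: algebra_simps power2_eq_square)
      then show ?thesis by (simp only: quad_char_mult_power2[OF assms four])
    qed
    then show ?thesis by (simp add: discriminant_sum_def)
  qed
  finally show ?thesis .
qed

lemma discriminant_sum_zero_left:
  fixes \<psi> :: "'a::{finite,field} \<Rightarrow> complex"
  assumes "(2::'a) \<noteq> 0" and "additive_char \<psi>" and "w \<noteq> 0"
  shows "discriminant_sum \<psi> 0 w = -1"
proof -
  have "(- 4::'a) * w \<noteq> 0" using four_neq_zero[OF assms(1)] assms(3) by simp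
  then show ?thesis
    using assms(2) sum_quad_char_power2_add[OF assms(1), of "- 4 * w"]
    by (simp add: discriminant_sum_def additive_char_def)
qed

lemma discriminant_sum_zero_right:
  fixes \<psi> :: "'a::{finite,field} \<Rightarrow> complex"
  assumes "nontrivial_additive_char \<psi>" and "c \<noteq> 0"
  shows "discriminant_sum \<psi> c 0 = -1"
proof -
  have "\<psi> 0 = 1" using assms(1) by (simp add: nontrivial_additive_char_def additive_char_def)
  then have "discriminant_sum \<psi> c 0 = (\<Sum>z\<in>UNIV. \<psi> (c * z)) - 1"
    by (simp add: discriminant_sum_def quad_char_eq sum_diff1 if_distrib[of "\<lambda>t. t * _"]
        sum.If_cases Collect_neg_eq Compl_eq_Diff_UNIV)
  with assms show ?thesis by (simp add: sum_additive_char)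
qed

lemma sum_discriminant_sum:
  fixes \<psi> :: "'a::{finite,field} \<Rightarrow> complex"
  assumes "(2::'a) \<noteq> 0"
  shows "(\<Sum>w\<in>UNIV. discriminant_sum \<psi> c w) = 0"
proof -
  have four: "(- 4::'a) \<noteq> 0" using four_neq_zero[OF assms] by simp
  have "(\<Sum>w\<in>UNIV. quad_char (z ^ 2 - 4 * w)) = 0" for z :: 'a
    using sum_UNIV_mult_const[OF four, of "\<lambda>w. quad_char (w + z ^ 2)"] sum_quad_char[OF assms]
    by (simp add: algebra_simps)
  then show ?thesis
    unfolding discriminant_sum_def by (subst sum.swap) (simp add: sum_distrib_right[symmetric])
qed

lemma discriminant_sum_rescale:
  fixes \<psi> :: "'a::{finite,field} \<Rightarrow> complex"
  assumes "(2::'a) \<noteq> 0" and "t \<noteq> 0"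
  shows "discriminant_sum \<psi> c (t ^ 2 * w) = discriminant_sum \<psi> (t * c) w"
proof -
  have "discriminant_sum \<psi> c (t ^ 2 * w) = (\<Sum>z\<in>UNIV. quad_char ((t * z) ^ 2 - 4 * (t ^ 2 * w)) * \<psi> (c * (t * z)))"
    unfolding discriminant_sum_def by (rule sum_UNIV_mult_const[OF assms(2), symmetric])
  also have "\<dots> = discriminant_sum \<psi> (t * c) w"
  proof -
    have "quad_char ((t * z) ^ 2 - 4 * (t ^ 2 * w)) = quad_char (z ^ 2 - 4 * w)" for z
    proof -
      have "(t * z) ^ 2 - 4 * (t ^ 2 * w) = (z ^ 2 - 4 * w) * t ^ 2"
        by (simp add: algebra_simps power2_eq_square)
      then show ?thesis by (simp only: quad_char_mult_power2[OF assms])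
    qed
    then show ?thesis by (simp add: discriminant_sum_def mult.commute mult.left_commute)
  qed
  finally show ?thesis .
qed

lemma card_nonzero_pairs_with_sum_product:
  fixes s p :: "'a::{finite,field}"
  assumes "(2::'a) \<noteq> 0"
  shows "of_nat (card {(x, y). x \<noteq> 0 \<and> y \<noteq> 0 \<and> x + y = s \<and> x * y = p})
    = (if p = 0 then 0 else 1 + quad_char (s ^ 2 - 4 * p))"
proof (cases "p = 0")
  case False
  then have "{(x, y). x \<noteq> 0 \<and> y \<noteq> 0 \<and> x + y = s \<and> x * y = p}
      = (\<lambda>x. (x, s - x)) ` {x. x ^ 2 + (- s) * x + p = 0}"
    by (auto simp: image_iff power2_eq_square algebra_simps)
  moreover have "inj (\<lambda>x::'a. (x, s - x))" by (auto intro: injI)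
  ultimately show ?thesis
    using False card_quadratic_roots[OF assms, of "- s" p] by (simp add: card_image inj_on_subset)
qed auto

lemma kloosterman_square_eq_pair_sum:
  fixes \<psi> :: "'a::{finite,field} \<Rightarrow> complex"
  assumes "(2::'a) \<noteq> 0" and "additive_char \<psi>"
  shows "(kloosterman \<psi> a) ^ 2 =
    (\<Sum>p | p \<noteq> 0. \<Sum>s\<in>UNIV. (1 + quad_char (s ^ 2 - 4 * p)) * \<psi> ((p + a) / p * s))"
proof -
  define NZ where "NZ = {x::'a. x \<noteq> 0}"
  define F where "F = (\<lambda>(s, p). \<psi> ((p + a) / p * s))"
  have "(kloosterman \<psi> a) ^ 2 = (\<Sum>(x, y)\<in>NZ \<times> NZ. \<psi> (x + a / x) * \<psi> (y + a / y))"
    unfolding kloosterman_def NZ_def by (simp add: power2_eq_square sum_product sum.cartesian_product)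
  also have "\<dots> = (\<Sum>(x, y)\<in>NZ \<times> NZ. F (x + y, x * y))"
  proof (rule sum.cong)
    fix P assume "P \<in> NZ \<times> NZ"
    then obtain x y where P: "P = (x, y)" "x \<noteq> 0" "y \<noteq> 0" by (auto simp: NZ_def)
    then have "x + a / x + (y + a / y) = (x * y + a) / (x * y) * (x + y)"
      by (simp add: field_simps)
    moreover have "\<psi> (x + a / x) * \<psi> (y + a / y) = \<psi> (x + a / x + (y + a / y))"
      using assms(2) by (simp add: additive_char_def)
    ultimately show "(case P of (x, y) \<Rightarrow> \<psi> (x + a / x) * \<psi> (y + a / y)) =
        (case P of (x, y) \<Rightarrow> F (x + y, x * y))"
      by (simp add: P F_def)
  qed simp
  also have "\<dots> = (\<Sum>w\<in>UNIV. of_nat (card {P \<in> NZ \<times> NZ. (fst P + snd P, fst P * snd P) = w}) * F w)"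
    using sum_card_fibres[of "NZ \<times> NZ" F "\<lambda>P. (fst P + snd P, fst P * snd P)"]
    by (simp add: split_beta)
  also have "\<dots> = (\<Sum>(s, p)\<in>UNIV. (if p = 0 then 0 else 1 + quad_char (s ^ 2 - 4 * p)) * F (s, p))"
  proof (rule sum.cong)
    fix w :: "'a \<times> 'a"
    obtain s p where w: "w = (s, p)" by fastforce
    have "{P \<in> NZ \<times> NZ. (fst P + snd P, fst P * snd P) = w}
        = {(x, y). x \<noteq> 0 \<and> y \<noteq> 0 \<and> x + y = s \<and> x * y = p}"
      by (auto simp: w NZ_def)
    then show "of_nat (card {P \<in> NZ \<times> NZ. (fst P + snd P, fst P * snd P) = w}) * F w =
        (case w of (s, p) \<Rightarrow> (if p = 0 then 0 else 1 + quad_char (s ^ 2 - 4 * p)) * F (s, p))"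
      by (simp add: w card_nonzero_pairs_with_sum_product[OF assms(1)])
  qed simp
  also have "\<dots> = (\<Sum>s\<in>UNIV. \<Sum>p\<in>UNIV. (if p = 0 then 0 else 1 + quad_char (s ^ 2 - 4 * p)) * F (s, p))"
    by (simp add: sum.cartesian_product UNIV_Times_UNIV[symmetric] del: UNIV_Times_UNIV)
  also have "\<dots> = (\<Sum>p\<in>UNIV. \<Sum>s\<in>UNIV. (if p = 0 then 0 else 1 + quad_char (s ^ 2 - 4 * p)) * F (s, p))"
    by (rule sum.swap)
  also have "\<dots> = (\<Sum>p\<in>NZ. \<Sum>s\<in>UNIV. (1 + quad_char (s ^ 2 - 4 * p)) * F (s, p))"
    by (rule sum.mono_neutral_cong_right) (auto simp: NZ_def)
  finally show ?thesis by (simp add: NZ_def F_def)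
qed

lemma kloosterman_square:
  fixes \<psi> :: "'a::{finite,field} \<Rightarrow> complex"
  assumes "(2::'a) \<noteq> 0" and "nontrivial_additive_char \<psi>" and "a \<noteq> 0"
  shows "(kloosterman \<psi> a) ^ 2 =
    of_nat (card (UNIV::'a set)) + (\<Sum>p | p \<noteq> 0. discriminant_sum \<psi> ((p + a) / p) p)"
proof -
  have \<psi>: "additive_char \<psi>" using assms(2) by (simp add: nontrivial_additive_char_def)
  have "(\<Sum>p | p \<noteq> 0. \<Sum>s\<in>UNIV. \<psi> ((p + a) / p * s))
      = (\<Sum>p | p \<noteq> 0. if p = - a then of_nat (card (UNIV::'a set)) else 0)"
  proof (rule sum.cong)
    fix p :: 'a assume "p \<in> {p. p \<noteq> 0}"
    then show "(\<Sum>s\<in>UNIV. \<psi> ((p + a) / p * s)) = (if p = - a then of_nat (card (UNIV::'a set)) else 0)"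
      using sum_additive_char[OF assms(2), of "(p + a) / p"] by (simp add: add_eq_0_iff2)
  qed simp
  also have "\<dots> = of_nat (card (UNIV::'a set))" using assms(3) by simp
  finally have "(\<Sum>p | p \<noteq> 0. \<Sum>s\<in>UNIV. \<psi> ((p + a) / p * s)) = of_nat (card (UNIV::'a set))" .
  then show ?thesis
    unfolding kloosterman_square_eq_pair_sum[OF assms(1) \<psi>]
    by (simp add: distrib_right sum.distrib discriminant_sum_def)
qed

lemma card_fibre_square_quotient:
  fixes \<beta> \<gamma> w :: "'a::{finite,field}"
  assumes "(2::'a) \<noteq> 0" and "\<beta> \<noteq> 0" and "\<gamma> \<noteq> 0"
  shows "of_nat (card {p. p \<noteq> 0 \<and> p \<noteq> - (\<gamma> * \<beta> ^ 2) \<and> (p + \<gamma> * \<beta> ^ 2) ^ 2 / (p * \<beta> ^ 2) = w})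
    = (if w = 0 then 0 else 1 + quad_char (w * (w - 4 * \<gamma>)))"
proof -
  define a where "a = \<gamma> * \<beta> ^ 2"
  have "a \<noteq> 0" using assms by (simp add: a_def)
  show ?thesis
  proof (cases "w = 0")
    case True
    then show ?thesis using assms(2) by (auto simp: add_eq_0_iff2)
  next
    case False
    have "{p. p \<noteq> 0 \<and> p \<noteq> - a \<and> (p + a) ^ 2 / (p * \<beta> ^ 2) = w}
        = {p. p ^ 2 + (2 * a - w * \<beta> ^ 2) * p + a ^ 2 = 0}"
    proof -
      have "(p + a) ^ 2 / (p * \<beta> ^ 2) = w \<longleftrightarrow> p ^ 2 + (2 * a - w * \<beta> ^ 2) * p + a ^ 2 = 0"
        if "p \<noteq> 0" for p
        using that assms(2) by (simp add: field_simps power2_eq_square)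
      moreover have "p ^ 2 + (2 * a - w * \<beta> ^ 2) * p + a ^ 2 \<noteq> 0" if "p = 0 \<or> p = - a" for p
        using that \<open>a \<noteq> 0\<close> False assms(2) by (auto simp: power2_eq_square algebra_simps)
      ultimately show ?thesis by blast
    qed
    moreover have "(2 * a - w * \<beta> ^ 2) ^ 2 - 4 * a ^ 2 = w * (w - 4 * \<gamma>) * (\<beta> ^ 2) ^ 2"
      by (simp add: a_def power2_eq_square algebra_simps)
    ultimately show ?thesis
      using False card_quadratic_roots[OF assms(1), of "2 * a - w * \<beta> ^ 2" "a ^ 2"]
        quad_char_mult_power2[OF assms(1), of "\<beta> ^ 2" "w * (w - 4 * \<gamma>)"] assms(2)
      by (simp add: a_def)
  qed
qed

lemma kloosterman_square_eq_fibre_sum: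
  fixes \<psi> :: "'a::{finite,field} \<Rightarrow> complex"
  assumes "(2::'a) \<noteq> 0" and "nontrivial_additive_char \<psi>" and "\<beta> \<noteq> 0" and "\<gamma> \<noteq> 0"
  shows "(kloosterman \<psi> (\<gamma> * \<beta> ^ 2)) ^ 2 = of_nat (card (UNIV::'a set)) - 1 +
    (\<Sum>w\<in>UNIV. (if w = 0 then 0 else 1 + quad_char (w * (w - 4 * \<gamma>))) * discriminant_sum \<psi> \<beta> w)"
proof -
  define a where "a = \<gamma> * \<beta> ^ 2"
  define P where "P = {p. p \<noteq> 0 \<and> p \<noteq> - a}"
  have "a \<noteq> 0" using assms(3,4) by (simp add: a_def)
  have \<psi>: "additive_char \<psi>" using assms(2) by (simp add: nontrivial_additive_char_def)
  have "{p. p \<noteq> 0} = insert (- a) P" using \<open>a \<noteq> 0\<close> by (auto simp: P_def)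
  then have "(\<Sum>p | p \<noteq> 0. discriminant_sum \<psi> ((p + a) / p) p)
      = discriminant_sum \<psi> 0 (- a) + (\<Sum>p\<in>P. discriminant_sum \<psi> ((p + a) / p) p)"
    by (simp add: P_def)
  also have "discriminant_sum \<psi> 0 (- a) = -1"
    using discriminant_sum_zero_left[OF assms(1) \<psi>] \<open>a \<noteq> 0\<close> by simp
  also have "(\<Sum>p\<in>P. discriminant_sum \<psi> ((p + a) / p) p)
      = (\<Sum>p\<in>P. discriminant_sum \<psi> \<beta> ((p + a) ^ 2 / (p * \<beta> ^ 2)))"
  proof (rule sum.cong)
    fix p assume "p \<in> P"
    then have "p \<noteq> 0" "(p + a) / (p * \<beta>) \<noteq> 0" using assms(3) by (auto simp: P_def add_eq_0_iff2)
    moreover have "((p + a) / (p * \<beta>)) ^ 2 * p = (p + a) ^ 2 / (p * \<beta> ^ 2)"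
      "(p + a) / (p * \<beta>) * \<beta> = (p + a) / p"
      using \<open>p \<noteq> 0\<close> assms(3) by (simp_all add: field_simps power2_eq_square)
    ultimately show "discriminant_sum \<psi> ((p + a) / p) p = discriminant_sum \<psi> \<beta> ((p + a) ^ 2 / (p * \<beta> ^ 2))"
      using discriminant_sum_rescale[OF assms(1), of "(p + a) / (p * \<beta>)" \<psi> \<beta> p] by simp
  qed simp
  also have "\<dots> = (\<Sum>w\<in>UNIV. of_nat (card {p \<in> P. (p + a) ^ 2 / (p * \<beta> ^ 2) = w}) * discriminant_sum \<psi> \<beta> w)"
    by (rule sum_card_fibres) simp
  also have "\<dots> = (\<Sum>w\<in>UNIV. (if w = 0 then 0 else 1 + quad_char (w * (w - 4 * \<gamma>))) * discriminant_sum \<psi> \<beta> w)"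
    using card_fibre_square_quotient[OF assms(1,3,4)] by (simp add: P_def a_def)
  finally show ?thesis
    using kloosterman_square[OF assms(1,2) \<open>a \<noteq> 0\<close>] by (simp add: a_def)
qed

lemma M_sum_zero_left:
  fixes \<psi> :: "'a::{finite,field} \<Rightarrow> complex"
  assumes "(2::'a) \<noteq> 0" and "additive_char \<psi>" and "\<gamma> \<noteq> 0"
  shows "M_sum \<psi> 0 \<gamma> = 1"
proof -
  have "quad_char (w * (w - 4 * \<gamma>)) * discriminant_sum \<psi> 0 w = - quad_char (w * (w - 4 * \<gamma>))" for w
    using discriminant_sum_zero_left[OF assms(1,2), of w] by (cases "w = 0") simp_all
  then have "M_sum \<psi> 0 \<gamma> = - (\<Sum>w\<in>UNIV. quad_char (w * (w + - 4 * \<gamma>)))"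
    unfolding M_sum_eq_discriminant_sums[OF assms(1)] by (simp add: sum_negf)
  also have "\<dots> = 1"
    using sum_quad_char_mult_add[OF assms(1), of "- 4 * \<gamma>"] four_neq_zero[OF assms(1)] assms(3) by simp
  finally show ?thesis .
qed

theorem proposition3p3:
  fixes \<psi> :: "'a::{finite,field} \<Rightarrow> complex" and \<beta> \<gamma> :: 'a
  assumes "odd CHAR('a)"
    and "nontrivial_additive_char \<psi>"
    and "\<gamma> \<noteq> 0"
  shows "M_sum \<psi> \<beta> \<gamma> =
    (if \<beta> = 0 then 1 else (kloosterman \<psi> (\<gamma> * \<beta> ^ 2)) ^ 2 - of_nat (card (UNIV::'a set)))"
proof (cases "\<beta> = 0")
  case True
  with assms show ?thesis
    by (simp add: M_sum_zero_left two_neq_zero_if_odd_char nontrivial_additive_char_def)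
next
  case False
  have two: "(2::'a) \<noteq> 0" using two_neq_zero_if_odd_char[OF assms(1)] .
  let ?D = "discriminant_sum \<psi> \<beta>"
  have "(if w = 0 then 0 else 1 + quad_char (w * (w - 4 * \<gamma>))) * ?D w
      = ?D w + quad_char (w * (w - 4 * \<gamma>)) * ?D w - (if w = 0 then ?D 0 else 0)" for w
    by (simp add: algebra_simps)
  then have "(\<Sum>w\<in>UNIV. (if w = 0 then 0 else 1 + quad_char (w * (w - 4 * \<gamma>))) * ?D w)
      = (\<Sum>w\<in>UNIV. ?D w) + M_sum \<psi> \<beta> \<gamma> - ?D 0"
    by (simp add: sum.distrib sum_subtractf M_sum_eq_discriminant_sums[OF two])
  also have "\<dots> = M_sum \<psi> \<beta> \<gamma> + 1"
    using sum_discriminant_sum[OF two] discriminant_sum_zero_right[OF assms(2) False] by simp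
  finally show ?thesis
    using kloosterman_square_eq_fibre_sum[OF two assms(2) False assms(3)] False by simp
qed

end
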